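(* Let $n \ge 1$, let $0 < \alpha < \beta < \pi/2$, and set $\lambda = \frac{\cos\beta}{\cos\alpha}$, $\mu = \frac{\tan\alpha}{\tan\beta}$. Define $\Psi : \mathbf{R}^n \to \mathbf{R}^n$ by \[ \Psi(x_1,\dots,x_n) = \left(\lambda x_1,\dots,\lambda x_{n-1}, \lambda\mu x_n + \sqrt{(1-\lambda^2)(1-\mu^2)}\right). \] Then: (a) $\Psi$ is an affine bijection with $\Psi(B_n) \subset B_n$; (b) if $x \in E_{n,\alpha}$ then $\Psi(x) \in E_{n,\beta}$; (c) if $x,y \in E_{n,\alpha}$ then $\|\Psi(x)-\Psi(y)\| = \lambda\|x-y\|$; (d) if $x \in B_n$ satisfies $\Psi(x) \in S^{n-1}$, then $x \in E_{n,\alpha}$.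
   Context: $B_n$ is the closed Euclidean unit ball of $\mathbf{R}^n$, $S^{n-1}$ its boundary, $\|\cdot\|$ the Euclidean norm. For $\theta \in [-\pi/2,\pi/2]$, $E_{n,\theta} = \{(x_1,\dots,x_n) \in S^{n-1} : x_n = \sin\theta\}$. *)

theory Defs
  imports "HOL-Analysis.Analysis"
begin

text \<open>Points of R^n are vectors of type real^'n, where the finite, linearly
ordered index type 'n has n elements; the coordinates x_1,...,x_n are listed in
the order of 'n, so the last coordinate x_n is indexed by the greatest index.\<close>

definition lastidx :: "'n::{finite,linorder}" where
  "lastidx = Max UNIV"

definition Eset :: "real \<Rightarrow> (real^('n::{finite,linorder})) set" where
  "Eset \<theta> = {x. x \<in> sphere 0 1 \<and> x $ lastidx = sin \<theta>}"

definition lam :: "real \<Rightarrow> real \<Rightarrow> real" where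
  "lam \<alpha> \<beta> = cos \<beta> / cos \<alpha>"

definition mu :: "real \<Rightarrow> real \<Rightarrow> real" where
  "mu \<alpha> \<beta> = tan \<alpha> / tan \<beta>"

definition Psi :: "real \<Rightarrow> real \<Rightarrow> (real^('n::{finite,linorder})) \<Rightarrow> (real^('n::{finite,linorder}))" where
  "Psi \<alpha> \<beta> x = (\<chi> i. if i = lastidx
      then lam \<alpha> \<beta> * mu \<alpha> \<beta> * x $ i + sqrt ((1 - (lam \<alpha> \<beta>)\<^sup>2) * (1 - (mu \<alpha> \<beta>)\<^sup>2))
      else lam \<alpha> \<beta> * x $ i)"

end

theory Submission
  imports Defs
begin

text \<open>Write p = sin \<alpha>, q = sin \<beta>, L = lam \<alpha> \<beta>, M = mu \<alpha> \<beta> and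
K = sqrt ((1 - L^2) (1 - M^2)). Elementary trigonometry gives M q = L p and
1 - L^2 = q^2 (1 - M^2), hence K = q (1 - M^2), and these relations yield
the identity
  |Psi x|^2 = 1 - L^2 (1 - |x|^2) - L^2 (1 - M^2) (x_n - p)^2.
Since L^2 (1 - M^2) > 0, the ball is mapped into itself, and |Psi x| = 1 with
|x| \<le> 1 forces |x| = 1 and x_n = p. On E_{n,\<alpha>} the last coordinate is
constant, so Psi acts there as the homothety with ratio L, and the last
coordinate becomes L M p + K = q.\<close>

lemma norm_vec_squared_split:
  fixes x :: "real^'n" and k :: 'n
  shows "(norm x)\<^sup>2 = (\<Sum>i\<in>-{k}. (x$i)\<^sup>2) + (x$k)\<^sup>2"
proof -
  have "(norm x)\<^sup>2 = (\<Sum>i\<in>UNIV. (x$i)\<^sup>2)"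
    unfolding power2_norm_eq_inner inner_vec_def by (simp add: power2_eq_square)
  also have "\<dots> = (x$k)\<^sup>2 + (\<Sum>i\<in>UNIV - {k}. (x$i)\<^sup>2)"
    by (rule sum.remove) auto
  finally show ?thesis
    by (simp add: Compl_eq_Diff_UNIV)
qed

lemma Psi_nth:
  "Psi \<alpha> \<beta> x $ i = (if i = lastidx
      then lam \<alpha> \<beta> * mu \<alpha> \<beta> * x $ i + sqrt ((1 - (lam \<alpha> \<beta>)\<^sup>2) * (1 - (mu \<alpha> \<beta>)\<^sup>2))
      else lam \<alpha> \<beta> * x $ i)"
  by (simp add: Psi_def)

lemma Psi_affine: "\<exists>f c. linear f \<and> (\<forall>x. Psi \<alpha> \<beta> x = f x + c)"
proof (intro exI conjI allI)
  let ?L = "lam \<alpha> \<beta>" and ?M = "mu \<alpha> \<beta>"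
  show "linear (\<lambda>x::real^'n::{finite,linorder}. \<chi> i. if i = lastidx then ?L * ?M * x$i else ?L * x$i)"
    by (rule linearI) (simp_all add: vec_eq_iff algebra_simps)
  show "Psi \<alpha> \<beta> x = (\<chi> i. if i = lastidx then ?L * ?M * x$i else ?L * x$i)
      + (\<chi> i. if i = lastidx then sqrt ((1 - ?L\<^sup>2) * (1 - ?M\<^sup>2)) else 0)" for x
    by (simp add: vec_eq_iff Psi_nth)
qed

lemma bij_Psi:
  assumes "lam \<alpha> \<beta> \<noteq> 0" and "mu \<alpha> \<beta> \<noteq> 0"
  shows "bij (Psi \<alpha> \<beta> :: real^('n::{finite,linorder}) \<Rightarrow> real^('n::{finite,linorder}))"
proof -
  let ?L = "lam \<alpha> \<beta>" and ?M = "mu \<alpha> \<beta>"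
  let ?K = "sqrt ((1 - ?L\<^sup>2) * (1 - ?M\<^sup>2))"
  define g :: "real^('n::{finite,linorder}) \<Rightarrow> real^('n::{finite,linorder})"
    where "g y = (\<chi> i. if i = lastidx then (y$i - ?K) / (?L * ?M) else y$i / ?L)" for y
  have "g \<circ> Psi \<alpha> \<beta> = id" and "Psi \<alpha> \<beta> \<circ> g = id"
    using assms by (simp_all add: g_def fun_eq_iff vec_eq_iff Psi_nth)
  then show ?thesis
    by (rule o_bij)
qed

lemma norm_Psi_squared:
  "(norm (Psi \<alpha> \<beta> x))\<^sup>2 = (lam \<alpha> \<beta>)\<^sup>2 * ((norm x)\<^sup>2 - (x$lastidx)\<^sup>2)
     + (lam \<alpha> \<beta> * mu \<alpha> \<beta> * x$lastidx + sqrt ((1 - (lam \<alpha> \<beta>)\<^sup>2) * (1 - (mu \<alpha> \<beta>)\<^sup>2)))\<^sup>2"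
  using norm_vec_squared_split[of "Psi \<alpha> \<beta> x" lastidx] norm_vec_squared_split[of x lastidx]
  by (simp add: Psi_nth power_mult_distrib sum_distrib_left)

lemma Psi_diff_eq_scaleR:
  assumes "x$lastidx = y$lastidx"
  shows "Psi \<alpha> \<beta> x - Psi \<alpha> \<beta> y = lam \<alpha> \<beta> *\<^sub>R (x - y)"
  using assms by (simp add: vec_eq_iff Psi_nth algebra_simps)

lemma lam_mu_relations:
  assumes "0 < \<alpha>" and "\<alpha> < \<beta>" and "\<beta> < pi / 2"
  shows "0 < lam \<alpha> \<beta>" and "0 < mu \<alpha> \<beta>" and "mu \<alpha> \<beta> < 1"
    and "mu \<alpha> \<beta> * sin \<beta> = lam \<alpha> \<beta> * sin \<alpha>"
    and "1 - (lam \<alpha> \<beta>)\<^sup>2 = (sin \<beta>)\<^sup>2 * (1 - (mu \<alpha> \<beta>)\<^sup>2)"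
proof -
  have ca: "cos \<alpha> > 0" and cb: "cos \<beta> > 0"
    using assms by (auto intro!: cos_gt_zero_pi)
  have sb: "sin \<beta> > 0"
    using assms by (auto intro!: sin_gt_zero)
  have "tan \<alpha> < tan \<beta>"
    using assms by (intro tan_monotone) auto
  moreover have "tan \<alpha> > 0"
    using assms by (intro tan_gt_zero) auto
  ultimately show "0 < mu \<alpha> \<beta>" and "mu \<alpha> \<beta> < 1"
    by (simp_all add: mu_def)
  show "0 < lam \<alpha> \<beta>"
    using ca cb by (simp add: lam_def)
  show "mu \<alpha> \<beta> * sin \<beta> = lam \<alpha> \<beta> * sin \<alpha>"
    using ca cb sb by (simp add: mu_def lam_def tan_def field_simps)
  have "1 - (lam \<alpha> \<beta>)\<^sup>2 = ((cos \<alpha>)\<^sup>2 - (cos \<beta>)\<^sup>2) / (cos \<alpha>)\<^sup>2"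
    using ca by (simp add: lam_def field_simps)
  also have "(cos \<alpha>)\<^sup>2 - (cos \<beta>)\<^sup>2 = (sin \<beta>)\<^sup>2 * (cos \<alpha>)\<^sup>2 - (sin \<alpha>)\<^sup>2 * (cos \<beta>)\<^sup>2"
    by (simp add: cos_squared_eq algebra_simps)
  also have "\<dots> / (cos \<alpha>)\<^sup>2 = (sin \<beta>)\<^sup>2 * (1 - (mu \<alpha> \<beta>)\<^sup>2)"
    using ca cb sb by (simp add: mu_def tan_def field_simps)
  finally show "1 - (lam \<alpha> \<beta>)\<^sup>2 = (sin \<beta>)\<^sup>2 * (1 - (mu \<alpha> \<beta>)\<^sup>2)" .
qed

lemma Psi_quadratic_identity:
  fixes L M K p q t :: real
  assumes "M * q = L * p" and "1 - L\<^sup>2 = q\<^sup>2 * (1 - M\<^sup>2)" and "K = q * (1 - M\<^sup>2)"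
  shows "L\<^sup>2 * (1 - t\<^sup>2) + (L * M * t + K)\<^sup>2 = 1 - L\<^sup>2 * (1 - M\<^sup>2) * (t - p)\<^sup>2"
  using assms by algebra

lemma sqrt_lam_mu_eq:
  assumes "0 < \<alpha>" and "\<alpha> < \<beta>" and "\<beta> < pi / 2"
  shows "sqrt ((1 - (lam \<alpha> \<beta>)\<^sup>2) * (1 - (mu \<alpha> \<beta>)\<^sup>2)) = sin \<beta> * (1 - (mu \<alpha> \<beta>)\<^sup>2)"
proof -
  have "0 \<le> sin \<beta>"
    using assms by (intro sin_ge_zero) auto
  moreover have "(mu \<alpha> \<beta>)\<^sup>2 \<le> 1"
    using lam_mu_relations(2,3)[OF assms] by (simp add: abs_square_le_1)
  ultimately have "0 \<le> sin \<beta> * (1 - (mu \<alpha> \<beta>)\<^sup>2)"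
    by simp
  moreover have "(1 - (lam \<alpha> \<beta>)\<^sup>2) * (1 - (mu \<alpha> \<beta>)\<^sup>2) = (sin \<beta> * (1 - (mu \<alpha> \<beta>)\<^sup>2))\<^sup>2"
    unfolding lam_mu_relations(5)[OF assms] by (simp add: power2_eq_square)
  ultimately show ?thesis
    by simp
qed

lemma one_minus_norm_Psi_squared:
  assumes "0 < \<alpha>" and "\<alpha> < \<beta>" and "\<beta> < pi / 2"
  shows "1 - (norm (Psi \<alpha> \<beta> x))\<^sup>2 = (lam \<alpha> \<beta>)\<^sup>2 * (1 - (norm x)\<^sup>2)
      + (lam \<alpha> \<beta>)\<^sup>2 * (1 - (mu \<alpha> \<beta>)\<^sup>2) * (x$lastidx - sin \<alpha>)\<^sup>2"
  using norm_Psi_squared[of \<alpha> \<beta> x]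
    Psi_quadratic_identity[OF lam_mu_relations(4,5)[OF assms] sqrt_lam_mu_eq[OF assms], of "x$lastidx"]
  by (simp add: algebra_simps)

lemma Psi_last_coordinate:
  assumes "0 < \<alpha>" and "\<alpha> < \<beta>" and "\<beta> < pi / 2" and "x$lastidx = sin \<alpha>"
  shows "Psi \<alpha> \<beta> x $ lastidx = sin \<beta>"
proof -
  have "Psi \<alpha> \<beta> x $ lastidx = mu \<alpha> \<beta> * (lam \<alpha> \<beta> * sin \<alpha>) + sin \<beta> * (1 - (mu \<alpha> \<beta>)\<^sup>2)"
    by (simp add: Psi_nth assms(4) sqrt_lam_mu_eq[OF assms(1-3)])
  also have "\<dots> = sin \<beta>"
    unfolding lam_mu_relations(4)[OF assms(1-3), symmetric] by (simp add: power2_eq_square algebra_simps)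
  finally show ?thesis .
qed

theorem lemma6:
  fixes \<alpha> \<beta> :: real
    and \<Psi> :: "real^('n::{finite,linorder}) \<Rightarrow> real^('n::{finite,linorder})"
  defines "\<Psi> \<equiv> Psi \<alpha> \<beta>"
  assumes "0 < \<alpha>" and "\<alpha> < \<beta>" and "\<beta> < pi / 2"
  shows "((\<exists>f c. linear f \<and> (\<forall>x. \<Psi> x = f x + c)) \<and> bij \<Psi> \<and>
          \<Psi> ` cball 0 1 \<subseteq> cball 0 1)
       \<and> (\<forall>x \<in> Eset \<alpha>. \<Psi> x \<in> Eset \<beta>)
       \<and> (\<forall>x \<in> Eset \<alpha>. \<forall>y \<in> Eset \<alpha>.
            norm (\<Psi> x - \<Psi> y) = lam \<alpha> \<beta> * norm (x - y))
       \<and> (\<forall>x \<in> cball 0 1. \<Psi> x \<in> sphere 0 1 \<longrightarrow> x \<in> Eset \<alpha>)"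
proof -
  note params = lam_mu_relations[OF assms(2-4)]
  have deficit: "1 - (norm (\<Psi> x))\<^sup>2 = (lam \<alpha> \<beta>)\<^sup>2 * (1 - (norm x)\<^sup>2)
      + (lam \<alpha> \<beta>)\<^sup>2 * (1 - (mu \<alpha> \<beta>)\<^sup>2) * (x$lastidx - sin \<alpha>)\<^sup>2" for x
    unfolding \<Psi>_def by (rule one_minus_norm_Psi_squared[OF assms(2-4)])
  have c_pos: "0 < (lam \<alpha> \<beta>)\<^sup>2 * (1 - (mu \<alpha> \<beta>)\<^sup>2)"
    using params(1-3) by (simp add: power_less_one_iff)
  have norm_le_1: "norm x \<le> 1 \<longleftrightarrow> 0 \<le> 1 - (norm x)\<^sup>2" for x :: "real^('n::{finite,linorder})"
    by (simp add: abs_square_le_1)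
  have norm_eq_1: "norm x = 1 \<longleftrightarrow> 1 - (norm x)\<^sup>2 = 0" for x :: "real^('n::{finite,linorder})"
    by (smt (verit) norm_ge_zero power2_eq_1_iff)
  have "\<exists>f c. linear f \<and> (\<forall>x. \<Psi> x = f x + c)"
    unfolding \<Psi>_def by (rule Psi_affine)
  moreover have "bij \<Psi>"
    unfolding \<Psi>_def using params(1,2) by (intro bij_Psi) auto
  moreover have "\<Psi> ` cball 0 1 \<subseteq> cball 0 1"
    using deficit c_pos by (auto simp: norm_le_1 simp del: mult_le_0_iff)
  moreover have "\<Psi> x \<in> Eset \<beta>" if "x \<in> Eset \<alpha>" for x
    using that deficit[of x] Psi_last_coordinate[OF assms(2-4)]
    by (auto simp: Eset_def \<Psi>_def norm_eq_1)
  moreover have "norm (\<Psi> x - \<Psi> y) = lam \<alpha> \<beta> * norm (x - y)" if "x \<in> Eset \<alpha>" "y \<in> Eset \<alpha>" for x y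
    using that params(1) by (simp add: Eset_def \<Psi>_def Psi_diff_eq_scaleR)
  moreover have "x \<in> Eset \<alpha>" if "norm x \<le> 1" "norm (\<Psi> x) = 1" for x
    using that deficit[of x] c_pos params(1)
    by (auto simp: Eset_def norm_le_1 norm_eq_1 add_nonneg_eq_0_iff)
  ultimately show ?thesis
    by auto
qed

end
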